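(* Let $L$ be a sharp C-lattice and $p\in L$ a prime element. Then the localization $L_p$ is sharp.
   Context: A multiplicative lattice is a complete lattice $(L,\le)$ with bottom $0$ and top $1$ which is also a commutative monoid with identity $1$ such that $a(\bigvee_\alpha b_\alpha)=\bigvee_\alpha(ab_\alpha)$ for all $a,b_\alpha\in L$. An element $c$ is compact if $c\le\bigvee S$ implies $c\le\bigvee T$ for some finite $T\subseteq S$. A C-lattice is a multiplicative lattice in which $1$ is compact, the product of two compact elements is compact, and every element is a join of compact elements; let $L^*$ denote its set of compact elements. A proper element $p\neq1$ is prime if $xy\le p$ implies $x\le p$ or $y\le p$. For $p$ prime and $x\in L$, $x_p=\bigvee\{a\in L^*: as\le x \text{ for some } s\in L^* \text{ with } s\not\le p\}$, and $L_p=\{x_p: x\in L\}$ is a lattice with multiplication $(x,y)\mapsto(xy)_p$, join $\{b_\alpha\}\mapsto(\bigvee b_\alpha)_p$ and meet $\{b_\alpha\}\mapsto(\bigwedge b_\alpha)_p$. A lattice $M$ is sharp if whenever $a_1a_2\le b$ in $M$, there exist $b_1,b_2\in M$ with $a_i\le b_i$ ($i=1,2$) and $b=b_1b_2$. *)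

theory Defs
  imports Main
begin

definition mult_lattice :: "('a::complete_lattice \<Rightarrow> 'a \<Rightarrow> 'a) \<Rightarrow> bool" where
  "mult_lattice m \<longleftrightarrow>
     (\<forall>a b c. m (m a b) c = m a (m b c)) \<and>
     (\<forall>a b. m a b = m b a) \<and>
     (\<forall>a. m a top = a) \<and>
     (\<forall>a B. m a (Sup B) = Sup ((m a) ` B))"

definition compact_el :: "'a::complete_lattice \<Rightarrow> bool" where
  "compact_el c \<longleftrightarrow> (\<forall>S. c \<le> Sup S \<longrightarrow> (\<exists>T. T \<subseteq> S \<and> finite T \<and> c \<le> Sup T))"

definition C_lattice :: "('a::complete_lattice \<Rightarrow> 'a \<Rightarrow> 'a) \<Rightarrow> bool" where
  "C_lattice m \<longleftrightarrow> mult_lattice m \<and> compact_el (top::'a) \<and>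
     (\<forall>a b. compact_el a \<and> compact_el b \<longrightarrow> compact_el (m a b)) \<and>
     (\<forall>x::'a. x = Sup {c. compact_el c \<and> c \<le> x})"

definition prime_el :: "('a::complete_lattice \<Rightarrow> 'a \<Rightarrow> 'a) \<Rightarrow> 'a \<Rightarrow> bool" where
  "prime_el m p \<longleftrightarrow> p \<noteq> top \<and> (\<forall>x y. m x y \<le> p \<longrightarrow> x \<le> p \<or> y \<le> p)"

definition loc :: "('a::complete_lattice \<Rightarrow> 'a \<Rightarrow> 'a) \<Rightarrow> 'a \<Rightarrow> 'a \<Rightarrow> 'a" where
  "loc m p x = Sup {a. compact_el a \<and> (\<exists>s. compact_el s \<and> \<not> s \<le> p \<and> m a s \<le> x)}"

definition Lp :: "('a::complete_lattice \<Rightarrow> 'a \<Rightarrow> 'a) \<Rightarrow> 'a \<Rightarrow> 'a set" where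
  "Lp m p = range (loc m p)"

definition sharp_on :: "'a::order set \<Rightarrow> ('a \<Rightarrow> 'a \<Rightarrow> 'a) \<Rightarrow> bool" where
  "sharp_on M mm \<longleftrightarrow> (\<forall>a1\<in>M. \<forall>a2\<in>M. \<forall>b\<in>M. mm a1 a2 \<le> b \<longrightarrow>
     (\<exists>b1\<in>M. \<exists>b2\<in>M. a1 \<le> b1 \<and> a2 \<le> b2 \<and> b = mm b1 b2))"

definition sharp :: "('a::complete_lattice \<Rightarrow> 'a \<Rightarrow> 'a) \<Rightarrow> bool" where
  "sharp m \<longleftrightarrow> sharp_on UNIV m"

end

theory Submission
  imports Defs
begin

text \<open>Sharpness passes to the image of any extensive, idempotent operator \<open>c\<close> with
\<open>c (c x * c y) = c (x * y)\<close>: if \<open>c (a\<^sub>1 a\<^sub>2) \<le> b = c b\<close>, factor \<open>b = b\<^sub>1 b\<^sub>2\<close> in the ambient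
lattice, and then \<open>b = c (c b\<^sub>1 * c b\<^sub>2)\<close>. The localization \<open>x \<mapsto> x\<^sub>p\<close> is such an operator.
The key fact is that a compact \<open>a\<close> lies below \<open>x\<^sub>p\<close> iff \<open>a s \<le> x\<close> for some compact
\<open>s \<notin> p\<close>: by compactness only finitely many witnesses are needed, and their product is
again a compact witness since \<open>p\<close> is prime.\<close>

lemma sharp_on_range_closure:
  fixes m :: "'a::order \<Rightarrow> 'a \<Rightarrow> 'a" and c :: "'a \<Rightarrow> 'a"
  assumes "sharp_on UNIV m"
    and le_closure: "\<And>x. x \<le> c x"
    and closure_idem: "\<And>x. c (c x) = c x"
    and closure_mult: "\<And>x y. c (m (c x) (c y)) = c (m x y)"
  shows "sharp_on (range c) (\<lambda>x y. c (m x y))"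
  unfolding sharp_on_def
proof (intro ballI impI)
  fix a1 a2 b
  assume "b \<in> range c" and "c (m a1 a2) \<le> b"
  then have "m a1 a2 \<le> b" using le_closure order_trans by blast
  then obtain b1 b2 where "a1 \<le> b1" "a2 \<le> b2" "b = m b1 b2"
    using assms(1) unfolding sharp_on_def by blast
  moreover have "b = c b"
    using \<open>b \<in> range c\<close> closure_idem by auto
  ultimately have "b = c (m (c b1) (c b2))"
    by (simp add: closure_mult)
  moreover have "a1 \<le> c b1" "a2 \<le> c b2"
    using \<open>a1 \<le> b1\<close> \<open>a2 \<le> b2\<close> le_closure order_trans by blast+
  ultimately show "\<exists>b1\<in>range c. \<exists>b2\<in>range c. a1 \<le> b1 \<and> a2 \<le> b2 \<and> b = c (m b1 b2)"
    by blast
qed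

locale multiplicative_lattice =
  fixes m :: "'a::complete_lattice \<Rightarrow> 'a \<Rightarrow> 'a"
  assumes mult_lattice: "mult_lattice m"
begin

lemma mult_assoc: "m (m a b) c = m a (m b c)"
  using mult_lattice unfolding mult_lattice_def by blast

lemma mult_commute: "m a b = m b a"
  using mult_lattice unfolding mult_lattice_def by blast

lemma mult_top_right: "m a top = a"
  using mult_lattice unfolding mult_lattice_def by blast

lemma mult_Sup_right: "m a (Sup B) = Sup (m a ` B)"
  using mult_lattice unfolding mult_lattice_def by blast

lemma mult_mono_right:
  assumes "b \<le> c"
  shows "m a b \<le> m a c"
proof -
  have "m a c = m a (Sup {b, c})"
    using assms by (simp add: sup.absorb2)
  also have "\<dots> = sup (m a b) (m a c)"
    unfolding mult_Sup_right by simp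
  finally show ?thesis
    by (metis sup.cobounded1)
qed

lemma mult_mono: "a \<le> a' \<Longrightarrow> b \<le> b' \<Longrightarrow> m a b \<le> m a' b'"
  by (metis mult_commute mult_mono_right order_trans)

lemma mult_le_left: "m a b \<le> a"
  by (metis mult_mono_right top_greatest mult_top_right)

end

locale c_lattice =
  fixes m :: "'a::complete_lattice \<Rightarrow> 'a \<Rightarrow> 'a"
  assumes C_lattice: "C_lattice m"

sublocale c_lattice \<subseteq> multiplicative_lattice
  using C_lattice by unfold_locales (simp add: C_lattice_def)

context c_lattice
begin

lemma compact_top: "compact_el (top :: 'a)"
  using C_lattice by (simp add: C_lattice_def)

lemma compact_mult: "compact_el a \<Longrightarrow> compact_el b \<Longrightarrow> compact_el (m a b)"
  using C_lattice by (simp add: C_lattice_def)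

lemma Sup_compact_below: "Sup {c. compact_el c \<and> c \<le> x} = (x :: 'a)"
  using C_lattice[unfolded C_lattice_def, THEN conjunct2, THEN conjunct2, THEN conjunct2,
      rule_format, of x]
  by (rule sym)

lemma mult_eq_Sup_compact_products:
  "m x y = Sup {m c d | c d. compact_el c \<and> c \<le> x \<and> compact_el d \<and> d \<le> y}"
  (is "_ = Sup ?P")
proof (rule antisym)
  have "m d x \<le> Sup ?P" if "compact_el d" "d \<le> y" for d
  proof -
    have "m d x = Sup (m d ` {c. compact_el c \<and> c \<le> x})"
      by (subst (1) Sup_compact_below[symmetric]) (rule mult_Sup_right)
    also have "\<dots> \<le> Sup ?P"
      using that mult_commute by (intro Sup_subset_mono image_subsetI) blast
    finally show ?thesis .
  qed
  then have "Sup (m x ` {d. compact_el d \<and> d \<le> y}) \<le> Sup ?P"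
    by (auto intro!: SUP_least simp only: mult_commute[of x])
  then show "m x y \<le> Sup ?P"
    by (subst (1) Sup_compact_below[symmetric]) (simp only: mult_Sup_right)
  show "Sup ?P \<le> m x y"
    by (rule Sup_least) (auto intro: mult_mono)
qed

end

locale localization_at_prime = c_lattice +
  fixes p :: "'a::complete_lattice"
  assumes prime: "prime_el m p"
begin

lemma top_not_le_prime: "\<not> top \<le> p"
  using prime unfolding prime_el_def using top.extremum_unique by blast

lemma mult_not_le_prime: "\<not> s \<le> p \<Longrightarrow> \<not> u \<le> p \<Longrightarrow> \<not> m s u \<le> p"
  using prime unfolding prime_el_def by blast

text \<open>\<open>loc_witnessed x a\<close> says that \<open>a/1 \<in> x\<^sub>p\<close>, in ring-theoretic language.\<close>

definition loc_witnessed :: "'a \<Rightarrow> 'a \<Rightarrow> bool" where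
  "loc_witnessed x a \<longleftrightarrow> (\<exists>s. compact_el s \<and> \<not> s \<le> p \<and> m a s \<le> x)"

lemma loc_eq_Sup_witnessed: "loc m p x = Sup {a. compact_el a \<and> loc_witnessed x a}"
  unfolding loc_def loc_witnessed_def by simp

lemma loc_witnessed_mult_witness:
  assumes "loc_witnessed x (m a s)" "compact_el s" "\<not> s \<le> p"
  shows "loc_witnessed x a"
proof -
  obtain u where "compact_el u" "\<not> u \<le> p" "m (m a s) u \<le> x"
    using assms(1) unfolding loc_witnessed_def by blast
  then show ?thesis
    using assms(2,3) compact_mult mult_not_le_prime mult_assoc
    unfolding loc_witnessed_def by metis
qed

lemma loc_witnessed_mult:
  assumes "loc_witnessed x a" "loc_witnessed y b"
  shows "loc_witnessed (m x y) (m a b)"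
proof -
  obtain s where s: "compact_el s" "\<not> s \<le> p" "m a s \<le> x"
    using assms(1) unfolding loc_witnessed_def by blast
  obtain t where t: "compact_el t" "\<not> t \<le> p" "m b t \<le> y"
    using assms(2) unfolding loc_witnessed_def by blast
  have "m (m a b) (m s t) = m (m a s) (m b t)"
    by (metis mult_assoc mult_commute)
  also have "\<dots> \<le> m x y"
    using s t by (simp add: mult_mono)
  finally show ?thesis
    using s t compact_mult mult_not_le_prime unfolding loc_witnessed_def by blast
qed

lemma loc_witnessed_common_witness:
  assumes "finite T" "\<forall>a\<in>T. loc_witnessed x a"
  shows "\<exists>s. compact_el s \<and> \<not> s \<le> p \<and> (\<forall>a\<in>T. m a s \<le> x)"
  using assms
proof (induction T rule: finite_induct)
  case empty
  then show ?case using compact_top top_not_le_prime by blast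
next
  case (insert a T)
  then obtain s where s: "compact_el s" "\<not> s \<le> p" "\<forall>b\<in>T. m b s \<le> x"
    by blast
  obtain u where u: "compact_el u" "\<not> u \<le> p" "m a u \<le> x"
    using insert.prems unfolding loc_witnessed_def by blast
  have "m a (m s u) \<le> m a u"
    by (metis mult_commute mult_le_left mult_mono_right)
  moreover have "m b (m s u) \<le> m b s" for b
    by (simp add: mult_le_left mult_mono_right)
  ultimately have "\<forall>b\<in>insert a T. m b (m s u) \<le> x"
    using s(3) u(3) by (auto intro: order_trans)
  moreover have "compact_el (m s u)" "\<not> m s u \<le> p"
    using s u by (simp_all add: compact_mult mult_not_le_prime)
  ultimately show ?case
    by blast
qed

lemma loc_witnessed_below_Sup:
  assumes "compact_el a" "a \<le> Sup S" "\<forall>b\<in>S. loc_witnessed x b"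
  shows "loc_witnessed x a"
proof -
  obtain T where T: "T \<subseteq> S" "finite T" "a \<le> Sup T"
    using assms(1,2) unfolding compact_el_def by blast
  then obtain s where s: "compact_el s" "\<not> s \<le> p" "\<forall>b\<in>T. m b s \<le> x"
    using loc_witnessed_common_witness assms(3) by (meson subsetD)
  have "m a s \<le> m s (Sup T)"
    using T(3) by (metis mult_commute mult_mono_right)
  also have "\<dots> \<le> x"
    using s(3) by (auto simp: mult_Sup_right mult_commute intro!: Sup_least)
  finally show ?thesis
    using s(1,2) unfolding loc_witnessed_def by blast
qed

lemma compact_le_loc_iff:
  assumes "compact_el a"
  shows "a \<le> loc m p x \<longleftrightarrow> loc_witnessed x a"
  using assms loc_witnessed_below_Sup[of a _ x]
  by (auto simp: loc_eq_Sup_witnessed intro: Sup_upper)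

lemma le_loc: "x \<le> loc m p x"
proof -
  have "c \<le> x \<Longrightarrow> loc_witnessed x c" for c
    using compact_top top_not_le_prime by (auto simp: loc_witnessed_def mult_top_right)
  then have "Sup {c. compact_el c \<and> c \<le> x} \<le> loc m p x"
    unfolding loc_eq_Sup_witnessed by (auto intro: Sup_subset_mono)
  then show ?thesis
    by (simp add: Sup_compact_below)
qed

lemma loc_mono: "x \<le> y \<Longrightarrow> loc m p x \<le> loc m p y"
  unfolding loc_eq_Sup_witnessed loc_witnessed_def
  by (auto intro!: Sup_subset_mono intro: order_trans)

lemma loc_idem: "loc m p (loc m p x) = loc m p x"
proof (rule antisym)
  have "a \<le> loc m p x" if a: "compact_el a" "loc_witnessed (loc m p x) a" for a
  proof -
    obtain s where s: "compact_el s" "\<not> s \<le> p" "m a s \<le> loc m p x"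
      using a(2) unfolding loc_witnessed_def by blast
    then have "loc_witnessed x (m a s)"
      using a(1) compact_mult compact_le_loc_iff by blast
    then show ?thesis
      using a(1) s(1,2) compact_le_loc_iff loc_witnessed_mult_witness by blast
  qed
  then show "loc m p (loc m p x) \<le> loc m p x"
    unfolding loc_eq_Sup_witnessed[of "loc m p x"] by (blast intro: Sup_least)
qed (rule le_loc)

lemma mult_loc_le_loc_mult: "m (loc m p x) (loc m p y) \<le> loc m p (m x y)"
proof -
  have "m c d \<le> loc m p (m x y)"
    if "compact_el c" "c \<le> loc m p x" "compact_el d" "d \<le> loc m p y" for c d
    using that compact_mult compact_le_loc_iff loc_witnessed_mult by simp
  then show ?thesis
    by (subst mult_eq_Sup_compact_products) (blast intro: Sup_least)
qed

lemma loc_mult_loc: "loc m p (m (loc m p x) (loc m p y)) = loc m p (m x y)"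
proof (rule antisym)
  show "loc m p (m (loc m p x) (loc m p y)) \<le> loc m p (m x y)"
    using loc_mono[OF mult_loc_le_loc_mult] by (simp add: loc_idem)
  show "loc m p (m x y) \<le> loc m p (m (loc m p x) (loc m p y))"
    by (intro loc_mono mult_mono le_loc)
qed

end

theorem lemma2p6:
  fixes m :: "'a::complete_lattice \<Rightarrow> 'a \<Rightarrow> 'a" and p :: 'a
  assumes "C_lattice m" and "sharp m" and "prime_el m p"
  shows "sharp_on (Lp m p) (\<lambda>x y. loc m p (m x y))"
proof -
  interpret localization_at_prime m p
    using assms(1,3) by unfold_locales
  show ?thesis
    unfolding Lp_def
    using assms(2)[unfolded sharp_def] le_loc loc_idem loc_mult_loc
    by (rule sharp_on_range_closure)
qed

end
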